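(* Let $F$ be an algebraically closed field and $A$ a symmetric $F$-algebra with symmetrizing linear form $\lambda:A\to F$. Let $I$ be a two-sided ideal of $A$ such that $A/I$ is also a symmetric $F$-algebra, with symmetrizing linear form $\mu:A/I\to F$. Let $\nu:A\to A/I$, $a\mapsto a+I$, be the canonical epimorphism and let $\nu^\ast:A/I\to A$ be its adjoint with respect to $\lambda$ and $\mu$, i.e. the $F$-linear map satisfying $\lambda(\nu^\ast(x)a)=\mu(x\nu(a))$ for all $x\in A/I$, $a\in A$. If $L$ is an ideal of the center $\mathrm{Z}(A/I)$, then $\nu^\ast(L)$ is an ideal of the center $\mathrm{Z}(A)$.
   Context: A symmetrizing linear form on a finite-dimensional algebra $A$ is a linear form $\lambda$ such that $\lambda(ab)=\lambda(ba)$ for all $a,b$ and whose kernel contains no nonzero left (or right) ideal; equivalently $(a,b)\mapsto\lambda(ab)$ is a nondegenerate symmetric associative bilinear form. *)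

theory Defs
  imports Main "HOL-Computational_Algebra.Polynomial"
begin

definition alg_closed_field :: "'f::field itself \<Rightarrow> bool" where
  "alg_closed_field _ \<longleftrightarrow> (\<forall>p :: 'f poly. 0 < degree p \<longrightarrow> (\<exists>x. poly p x = 0))"

definition fd_algebra :: "('f::field \<Rightarrow> 'a::ring_1 \<Rightarrow> 'a) \<Rightarrow> bool" where
  "fd_algebra sc \<longleftrightarrow> vector_space sc
     \<and> (\<forall>c x y. sc c (x * y) = sc c x * y \<and> sc c (x * y) = x * sc c y)
     \<and> (\<exists>S. finite S \<and> module.span sc S = UNIV)"

definition left_ideal :: "'a::ring_1 set \<Rightarrow> bool" where
  "left_ideal J \<longleftrightarrow> 0 \<in> J \<and> (\<forall>x\<in>J. \<forall>y\<in>J. x + y \<in> J) \<and> (\<forall>a. \<forall>x\<in>J. a * x \<in> J)"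

definition two_sided_ideal :: "'a::ring_1 set \<Rightarrow> bool" where
  "two_sided_ideal J \<longleftrightarrow> left_ideal J \<and> (\<forall>a. \<forall>x\<in>J. x * a \<in> J)"

definition symmetrizing_form :: "('f::field \<Rightarrow> 'a::ring_1 \<Rightarrow> 'a) \<Rightarrow> ('a \<Rightarrow> 'f) \<Rightarrow> bool" where
  "symmetrizing_form sc lam \<longleftrightarrow> Vector_Spaces.linear sc (*) lam
     \<and> (\<forall>a b. lam (a * b) = lam (b * a))
     \<and> (\<forall>J. left_ideal J \<and> J \<subseteq> {a. lam a = 0} \<longrightarrow> J \<subseteq> {0})"

definition symmetric_algebra_with :: "('f::field \<Rightarrow> 'a::ring_1 \<Rightarrow> 'a) \<Rightarrow> ('a \<Rightarrow> 'f) \<Rightarrow> bool" where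
  "symmetric_algebra_with sc lam \<longleftrightarrow> fd_algebra sc \<and> symmetrizing_form sc lam"

definition algebra_hom :: "('f::field \<Rightarrow> 'a::ring_1 \<Rightarrow> 'a) \<Rightarrow> ('f \<Rightarrow> 'b::ring_1 \<Rightarrow> 'b) \<Rightarrow> ('a \<Rightarrow> 'b) \<Rightarrow> bool" where
  "algebra_hom scA scB h \<longleftrightarrow> Vector_Spaces.linear scA scB h
     \<and> (\<forall>x y. h (x * y) = h x * h y) \<and> h 1 = 1"

definition center :: "'a::ring_1 set" where
  "center = {z. \<forall>a. z * a = a * z}"

definition center_ideal :: "'a::ring_1 set \<Rightarrow> bool" where
  "center_ideal L \<longleftrightarrow> L \<subseteq> center \<and> 0 \<in> L \<and> (\<forall>x\<in>L. \<forall>y\<in>L. x + y \<in> L)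
     \<and> (\<forall>x\<in>L. - x \<in> L) \<and> (\<forall>z\<in>center. \<forall>x\<in>L. z * x \<in> L)"

end

theory Submission
  imports Defs
begin

text \<open>Since \<open>\<lambda>\<close> is nondegenerate, an element \<open>u\<close> of \<open>A\<close> is determined by the
  values \<open>\<lambda>(u c)\<close>. Computing these with the adjunction and the symmetry of \<open>\<lambda>\<close> and \<open>\<mu>\<close>
  shows \<open>\<nu>\<^sup>*(\<nu>(z) x) = z \<nu>\<^sup>*(x)\<close> for all \<open>z \<in> A\<close>, and that \<open>\<nu>\<^sup>*\<close> maps central
  elements of \<open>A/I\<close> to central elements of \<open>A\<close>. As the surjection \<open>\<nu>\<close> maps \<open>Z(A)\<close> into
  \<open>Z(A/I)\<close>, the additive subgroup \<open>\<nu>\<^sup>*(L)\<close> is stable under multiplication by \<open>Z(A)\<close>.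
  Algebraic closedness of \<open>F\<close> and the description of the kernel of \<open>\<nu>\<close> are not needed.\<close>

lemma symmetrizing_form_right_nondegenerate:
  assumes "symmetrizing_form sc lam" and "\<And>c. lam (d * c) = 0"
  shows "d = 0"
proof -
  have lam: "module_hom sc (*) lam" "\<And>a b. lam (a * b) = lam (b * a)"
    using assms(1) by (auto simp: symmetrizing_form_def module_hom_linearI)
  define J where "J = {y. \<forall>c. lam (y * c) = 0}"
  have "left_ideal J"
    unfolding left_ideal_def J_def
  proof (intro conjI ballI allI CollectI)
    fix x y c assume "x \<in> {y. \<forall>c. lam (y * c) = 0}" "y \<in> {y. \<forall>c. lam (y * c) = 0}"
    then show "lam ((x + y) * c) = 0"
      by (simp add: distrib_right module_hom.add[OF lam(1)])
  next
    fix a x c assume "x \<in> {y. \<forall>c. lam (y * c) = 0}"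
    then show "lam (a * x * c) = 0"
      using lam(2)[of a "x * c"] by (simp add: mult.assoc)
  qed (simp add: module_hom.zero[OF lam(1)])
  moreover have "J \<subseteq> {a. lam a = 0}"
    unfolding J_def by (force dest: spec[of _ 1])
  ultimately have "J \<subseteq> {0}"
    using assms(1) by (simp add: symmetrizing_form_def)
  moreover have "d \<in> J"
    using assms(2) by (simp add: J_def)
  ultimately show ?thesis by blast
qed

lemma symmetrizing_form_eqI:
  assumes "symmetrizing_form sc lam" and "\<And>c. lam (u * c) = lam (v * c)"
  shows "u = v"
proof -
  have "module_hom sc (*) lam"
    using assms(1) by (simp add: symmetrizing_form_def module_hom_linearI)
  then have "lam ((u - v) * c) = 0" for c
    using assms(2) by (simp add: left_diff_distrib module_hom.diff)
  then have "u - v = 0"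
    by (rule symmetrizing_form_right_nondegenerate[OF assms(1)])
  then show ?thesis by simp
qed

lemma adjoint_mult_left:
  fixes nu :: "'a::ring_1 \<Rightarrow> 'b::ring_1"
  assumes lam: "symmetrizing_form sc lam"
    and mu: "\<And>a b. mu (a * b) = mu (b * a)"
    and nu: "\<And>a b. nu (a * b) = nu a * nu b"
    and adj: "\<And>x a. lam (nustar x * a) = mu (x * nu a)"
  shows "nustar (nu z * x) = z * nustar x"
proof (rule symmetrizing_form_eqI[OF lam])
  have sym: "\<And>a b. lam (a * b) = lam (b * a)"
    using lam by (simp add: symmetrizing_form_def)
  fix c
  have "lam (nustar (nu z * x) * c) = mu (nu z * (x * nu c))"
    by (simp add: adj mult.assoc)
  also have "\<dots> = mu (x * nu c * nu z)"
    by (rule mu)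
  also have "\<dots> = lam (nustar x * (c * z))"
    by (simp add: adj nu mult.assoc)
  also have "\<dots> = lam (z * nustar x * c)"
    using sym[of z "nustar x * c"] by (simp add: mult.assoc)
  finally show "lam (nustar (nu z * x) * c) = lam (z * nustar x * c)" .
qed

lemma adjoint_center:
  fixes nu :: "'a::ring_1 \<Rightarrow> 'b::ring_1"
  assumes lam: "symmetrizing_form sc lam"
    and mu: "\<And>a b. mu (a * b) = mu (b * a)"
    and nu: "\<And>a b. nu (a * b) = nu a * nu b"
    and adj: "\<And>x a. lam (nustar x * a) = mu (x * nu a)"
    and x: "x \<in> center"
  shows "nustar x \<in> center"
proof -
  have sym: "\<And>a b. lam (a * b) = lam (b * a)"
    using lam by (simp add: symmetrizing_form_def)
  have x_comm: "\<And>b. x * b = b * x"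
    using x by (simp add: center_def)
  have "nustar x * a = a * nustar x" for a
  proof (rule symmetrizing_form_eqI[OF lam])
    fix c
    have "lam (nustar x * a * c) = mu (nu a * x * nu c)"
      by (simp add: adj nu x_comm mult.assoc)
    also have "\<dots> = lam (nustar x * (c * a))"
      using mu[of "nu a" "x * nu c"] by (simp add: adj nu mult.assoc)
    also have "\<dots> = lam (a * nustar x * c)"
      using sym[of "nustar x * c" a] by (simp add: mult.assoc)
    finally show "lam (nustar x * a * c) = lam (a * nustar x * c)" .
  qed
  then show ?thesis by (simp add: center_def)
qed

lemma surj_mult_image_center:
  fixes f :: "'a::ring_1 \<Rightarrow> 'b::ring_1"
  assumes "surj f" and mult: "\<And>a b. f (a * b) = f a * f b" and "z \<in> center"
  shows "f z \<in> center"
  unfolding center_def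
proof (intro CollectI allI)
  fix b
  obtain a where "b = f a"
    using assms(1) by (metis surjD)
  moreover have "f z * f a = f a * f z"
    using assms(3) by (simp add: center_def flip: mult)
  ultimately show "f z * b = b * f z" by simp
qed

lemma center_ideal_image:
  assumes L: "center_ideal L" and f: "module_hom s1 s2 f"
    and "f ` L \<subseteq> center"
    and "\<And>z x. z \<in> center \<Longrightarrow> x \<in> L \<Longrightarrow> z * f x \<in> f ` L"
  shows "center_ideal (f ` L)"
  unfolding center_ideal_def
proof (intro conjI ballI)
  show "0 \<in> f ` L"
    using L module_hom.zero[OF f] by (metis center_ideal_def image_eqI)
next
  fix u v assume "u \<in> f ` L" "v \<in> f ` L"
  then obtain x y where "x \<in> L" "y \<in> L" "u = f x" "v = f y" by blast
  then have "x + y \<in> L" "u + v = f (x + y)"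
    using L module_hom.add[OF f] by (simp_all add: center_ideal_def)
  then show "u + v \<in> f ` L" by blast
next
  fix u assume "u \<in> f ` L"
  then obtain x where "x \<in> L" "u = f x" by blast
  then have "- x \<in> L" "- u = f (- x)"
    using L module_hom.neg[OF f] by (simp_all add: center_ideal_def)
  then show "- u \<in> f ` L" by blast
qed (use assms(3-4) in auto)

theorem proposition2:
  fixes scA :: "'f::field \<Rightarrow> 'a::ring_1 \<Rightarrow> 'a"
    and scB :: "'f \<Rightarrow> 'b::ring_1 \<Rightarrow> 'b"
    and lam :: "'a \<Rightarrow> 'f" and mu :: "'b \<Rightarrow> 'f"
    and I :: "'a set" and nu :: "'a \<Rightarrow> 'b" and nustar :: "'b \<Rightarrow> 'a"
    and L :: "'b set"
  assumes "alg_closed_field TYPE('f)"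
    and "symmetric_algebra_with scA lam"
    and "two_sided_ideal I"
    and "symmetric_algebra_with scB mu"
    and "algebra_hom scA scB nu" and "surj nu" and "{a. nu a = 0} = I"
    and "Vector_Spaces.linear scB scA nustar"
    and "\<forall>x a. lam (nustar x * a) = mu (x * nu a)"
    and "center_ideal L"
  shows "center_ideal (nustar ` L)"
proof (rule center_ideal_image)
  have lam: "symmetrizing_form scA lam"
    using assms(2) by (simp add: symmetric_algebra_with_def)
  have mu: "\<And>a b. mu (a * b) = mu (b * a)"
    using assms(4) by (simp add: symmetric_algebra_with_def symmetrizing_form_def)
  have nu: "\<And>a b. nu (a * b) = nu a * nu b"
    using assms(5) by (simp add: algebra_hom_def)
  note adj = assms(9)[rule_format]
  show "module_hom scB scA nustar"
    using assms(8) by (rule module_hom_linearI)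
  show "nustar ` L \<subseteq> center"
    using assms(10) adjoint_center[OF lam mu nu adj] by (auto simp: center_ideal_def)
  fix z :: 'a and x assume z: "z \<in> center" and x: "x \<in> L"
  have "nu z * x \<in> L"
    using assms(10) surj_mult_image_center[OF assms(6) nu z] x by (simp add: center_ideal_def)
  then show "z * nustar x \<in> nustar ` L"
    by (metis adjoint_mult_left[OF lam mu nu adj] image_eqI)
qed (fact assms(10))

end
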